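(* Let $n\ge 2$, $\mathbf A\in\mathcal G_n$ and $x\in\mathcal G_n(\mathbf A,\mathbf C_n)$. For each $i\in\operatorname{ran}x\setminus\{0\}$ let $u_i\colon A\to\{0,1\}$ be defined by $u_i(a)=1$ if and only if $x(a)\ge i$. Then each $u_i$ lies in $\mathcal D(U(\mathbf A),\mathbf 2)$, and the assignment $i\mapsto u_i$ is a bijection from $\operatorname{ran}x\setminus\{0\}$ onto the set ${\uparrow}(\omega\circ x)$ of elements of the poset $\mathcal D(U(\mathbf A),\mathbf 2)$ lying above $\omega\circ x$. In particular $|{\uparrow}(\omega\circ x)|\le n-1$. Moreover, for $x,y\in\mathcal G_n(\mathbf A,\mathbf C_n)$: $\omega\circ y$ covers $\omega\circ x$ in $\mathcal D(U(\mathbf A),\mathbf 2)$ if and only if $x^{-1}(\top)\subseteq y^{-1}(\top)$ and $|\operatorname{ran}x|-1=|\operatorname{ran}y|$.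
   Context: Fix an integer $n\ge 2$. $\mathbf C_n$ is the Heyting algebra whose universe is the chain $\{0<1<\dots<n-1\}$, with lattice operations min and max, $\bot=0$, $\top=n-1$, and $a\to b=\top$ if $a\le b$, $a\to b=b$ if $b<a$. $\mathcal G_n$ denotes the class of algebras isomorphic to subalgebras of direct powers of $\mathbf C_n$ (the variety generated by $\mathbf C_n$). For $\mathbf A\in\mathcal G_n$, $\mathcal G_n(\mathbf A,\mathbf C_n)$ is the set of Heyting algebra homomorphisms $\mathbf A\to\mathbf C_n$, and $\operatorname{ran}x$ denotes the image of $x$. $U(\mathbf A)$ denotes the bounded distributive lattice reduct of $\mathbf A$; $\mathbf 2$ is the two-element bounded lattice $\{0<1\}$; $\mathcal D(U(\mathbf A),\mathbf 2)$ is the set of bounded-lattice homomorphisms $U(\mathbf A)\to\mathbf 2$, ordered pointwise, and ${\uparrow}u$ denotes the set of elements $\ge u$ in this poset. $\omega\colon U(\mathbf C_n)\to\mathbf 2$ is the lattice homomorphism with $\omega(\top)=1$ and $\omega(k)=0$ for $k<\top$. *)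

theory Defs
  imports "HOL-Library.FuncSet"
begin

record 'a halg =
  carrier :: "'a set"
  hmeet :: "'a \<Rightarrow> 'a \<Rightarrow> 'a"
  hjoin :: "'a \<Rightarrow> 'a \<Rightarrow> 'a"
  himp  :: "'a \<Rightarrow> 'a \<Rightarrow> 'a"
  hbot  :: 'a
  htop  :: 'a

definition closed_alg :: "'a halg \<Rightarrow> bool" where
  "closed_alg A \<longleftrightarrow> hbot A \<in> carrier A \<and> htop A \<in> carrier A \<and>
     (\<forall>a\<in>carrier A. \<forall>b\<in>carrier A.
        hmeet A a b \<in> carrier A \<and> hjoin A a b \<in> carrier A \<and> himp A a b \<in> carrier A)"

definition Cn :: "nat \<Rightarrow> nat halg" where
  "Cn n = \<lparr> carrier = {..<n}, hmeet = min, hjoin = max,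
            himp = (\<lambda>a b. if a \<le> b then n - 1 else b), hbot = 0, htop = n - 1 \<rparr>"

definition hhom :: "'a halg \<Rightarrow> 'b halg \<Rightarrow> ('a \<Rightarrow> 'b) set" where
  "hhom A B = {h. (\<forall>a\<in>carrier A. h a \<in> carrier B) \<and>
     (\<forall>a\<in>carrier A. \<forall>b\<in>carrier A.
        h (hmeet A a b) = hmeet B (h a) (h b) \<and>
        h (hjoin A a b) = hjoin B (h a) (h b) \<and>
        h (himp A a b) = himp B (h a) (h b)) \<and>
     h (hbot A) = hbot B \<and> h (htop A) = htop B}"

text \<open>A is (isomorphic to) a subalgebra of a direct power C_n^I, the index set I living in
  type 'i: there is an injective homomorphism e of A into C_n^I (operations pointwise on I).\<close>
definition in_Gn :: "'i itself \<Rightarrow> nat \<Rightarrow> 'a halg \<Rightarrow> bool" where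
  "in_Gn _ n A \<longleftrightarrow> closed_alg A \<and>
     (\<exists>(I::'i set) (e::'a \<Rightarrow> 'i \<Rightarrow> nat).
        (\<forall>i\<in>I. (\<lambda>a. e a i) \<in> hhom A (Cn n)) \<and>
        (\<forall>a\<in>carrier A. \<forall>b\<in>carrier A. (\<forall>i\<in>I. e a i = e b i) \<longrightarrow> a = b))"

text \<open>Bounded lattice homomorphisms U(A) \<rightarrow> 2 with 2 = {0<1}; functions are extensional
  on the carrier.\<close>
definition Dhom :: "'a halg \<Rightarrow> ('a \<Rightarrow> nat) set" where
  "Dhom A = {u \<in> carrier A \<rightarrow>\<^sub>E {0, 1}.
     (\<forall>a\<in>carrier A. \<forall>b\<in>carrier A.
        u (hmeet A a b) = min (u a) (u b) \<and> u (hjoin A a b) = max (u a) (u b)) \<and>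
     u (hbot A) = 0 \<and> u (htop A) = 1}"

definition dle :: "'a halg \<Rightarrow> ('a \<Rightarrow> nat) \<Rightarrow> ('a \<Rightarrow> nat) \<Rightarrow> bool" where
  "dle A u v \<longleftrightarrow> (\<forall>a\<in>carrier A. u a \<le> v a)"

definition upset :: "'a halg \<Rightarrow> ('a \<Rightarrow> nat) \<Rightarrow> ('a \<Rightarrow> nat) set" where
  "upset A w = {u \<in> Dhom A. dle A w u}"

definition covers :: "'a halg \<Rightarrow> ('a \<Rightarrow> nat) \<Rightarrow> ('a \<Rightarrow> nat) \<Rightarrow> bool" where
  "covers A v w \<longleftrightarrow> w \<in> Dhom A \<and> v \<in> Dhom A \<and> dle A w v \<and> w \<noteq> v \<and>
     \<not> (\<exists>u\<in>Dhom A. dle A w u \<and> dle A u v \<and> u \<noteq> w \<and> u \<noteq> v)"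

definition omega :: "nat \<Rightarrow> nat \<Rightarrow> nat" where
  "omega n k = (if k = n - 1 then 1 else 0)"

definition omega_comp :: "nat \<Rightarrow> 'a halg \<Rightarrow> ('a \<Rightarrow> nat) \<Rightarrow> ('a \<Rightarrow> nat)" where
  "omega_comp n A x = restrict (omega n \<circ> x) (carrier A)"

definition uvec :: "'a halg \<Rightarrow> ('a \<Rightarrow> nat) \<Rightarrow> nat \<Rightarrow> ('a \<Rightarrow> nat)" where
  "uvec A x i = restrict (\<lambda>a. if i \<le> x a then 1 else 0) (carrier A)"

end

theory Submission imports Defs begin

text \<open>Every \<open>u \<in> {\<up>}(\<omega> \<circ> x)\<close> is upward closed along the order induced by \<open>x\<close>: if \<open>x a \<le> x b\<close> then
  \<open>x (a \<rightarrow> b)\<close> is the top of \<open>C\<^sub>n\<close>, so \<open>u (a \<rightarrow> b) = 1\<close>, and the identity \<open>(a \<and> (a \<rightarrow> b)) \<or> b = b\<close>,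
  valid in \<open>\<G>\<^sub>n\<close>, transfers \<open>u a = 1\<close> to \<open>u b = 1\<close>. Hence \<open>u\<close> is the threshold map \<open>u\<^sub>i\<close> for
  \<open>i\<close> the least \<open>x\<close>-value on which \<open>u\<close> is \<open>1\<close>, and the order on the up-set is the reverse of the
  order on \<open>ran x - {0}\<close>. So \<open>\<omega> \<circ> y\<close> covers \<open>\<omega> \<circ> x = u\<^bsub>\<top>\<^esub>\<close> iff \<open>\<omega> \<circ> y = u\<^sub>i\<close> with \<open>i\<close> the
  predecessor of \<open>\<top>\<close> in \<open>ran x\<close>; then \<open>y\<close> identifies exactly the values \<open>\<ge> i\<close> of \<open>x\<close>, which
  reduces \<open>ran x\<close> by one element precisely in that case.\<close>

lemma Cn_simps [simp]:
  "carrier (Cn n) = {..<n}" "hmeet (Cn n) = min" "hjoin (Cn n) = max"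
  "himp (Cn n) = (\<lambda>a b. if a \<le> b then n - 1 else b)" "hbot (Cn n) = 0" "htop (Cn n) = n - 1"
  by (simp_all add: Cn_def)

lemma hhomD:
  assumes "x \<in> hhom A (Cn n)"
  shows "a \<in> carrier A \<Longrightarrow> x a < n"
    and "a \<in> carrier A \<Longrightarrow> b \<in> carrier A \<Longrightarrow> x (hmeet A a b) = min (x a) (x b)"
    and "a \<in> carrier A \<Longrightarrow> b \<in> carrier A \<Longrightarrow> x (hjoin A a b) = max (x a) (x b)"
    and "a \<in> carrier A \<Longrightarrow> b \<in> carrier A \<Longrightarrow>
           x (himp A a b) = (if x a \<le> x b then n - 1 else x b)"
    and "x (hbot A) = 0" and "x (htop A) = n - 1"
  using assms unfolding hhom_def by auto

lemma closed_algD: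
  assumes "closed_alg A"
  shows "hbot A \<in> carrier A" "htop A \<in> carrier A"
    "a \<in> carrier A \<Longrightarrow> b \<in> carrier A \<Longrightarrow> hmeet A a b \<in> carrier A"
    "a \<in> carrier A \<Longrightarrow> b \<in> carrier A \<Longrightarrow> hjoin A a b \<in> carrier A"
    "a \<in> carrier A \<Longrightarrow> b \<in> carrier A \<Longrightarrow> himp A a b \<in> carrier A"
  using assms unfolding closed_alg_def by auto

lemma DhomD:
  assumes "u \<in> Dhom A"
  shows "a \<in> carrier A \<Longrightarrow> u a = 0 \<or> u a = 1"
    and "a \<notin> carrier A \<Longrightarrow> u a = undefined"
    and "a \<in> carrier A \<Longrightarrow> b \<in> carrier A \<Longrightarrow> u (hmeet A a b) = min (u a) (u b)"
    and "a \<in> carrier A \<Longrightarrow> b \<in> carrier A \<Longrightarrow> u (hjoin A a b) = max (u a) (u b)"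
    and "u (hbot A) = 0" and "u (htop A) = 1"
  using assms unfolding Dhom_def by (auto simp: PiE_def extensional_def)

lemma in_Gn_closed_alg: "in_Gn TYPE('i) n A \<Longrightarrow> closed_alg A"
  unfolding in_Gn_def by blast

lemma hhom_top_in_range:
  "x \<in> hhom A (Cn n) \<Longrightarrow> closed_alg A \<Longrightarrow> n - 1 \<in> x ` carrier A"
  using closed_algD(2) hhomD(6) by (metis image_eqI)

lemma in_Gn_join_meet_imp:
  assumes G: "in_Gn TYPE('i) n A" and a: "a \<in> carrier A" and b: "b \<in> carrier A"
  shows "hjoin A (hmeet A a (himp A a b)) b = b"
proof -
  obtain I :: "'i set" and e where hom: "\<forall>i\<in>I. (\<lambda>a. e a i) \<in> hhom A (Cn n)"
    and sep: "\<forall>a\<in>carrier A. \<forall>b\<in>carrier A. (\<forall>i\<in>I. e a i = e b i) \<longrightarrow> a = b"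
    using G unfolding in_Gn_def by blast
  note cl = closed_algD[OF in_Gn_closed_alg[OF G]]
  show ?thesis
  proof (rule sep[rule_format])
    show "hjoin A (hmeet A a (himp A a b)) b \<in> carrier A" using cl a b by simp
    fix i assume "i \<in> I"
    then have h: "(\<lambda>a. e a i) \<in> hhom A (Cn n)" using hom by blast
    show "e (hjoin A (hmeet A a (himp A a b)) b) i = e b i"
      using hhomD[OF h] cl a b by auto
  qed (fact b)
qed

lemma card_image_eq_if_same_kernel:
  assumes "\<forall>a\<in>S. \<forall>b\<in>S. f a = f b \<longleftrightarrow> g a = g b"
  shows "card (f ` S) = card (g ` S)"
proof -
  define h where "h k = g (inv_into S f k)" for k
  have hf: "h (f a) = g a" if "a \<in> S" for a
    using assms that inv_into_into[of "f a" f S] f_inv_into_f[of "f a" f S]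
    unfolding h_def by (metis image_eqI)
  have "g ` S = h ` f ` S" using hf by (simp add: image_image)
  moreover have "inj_on h (f ` S)"
    using hf assms by (auto intro!: inj_onI)
  ultimately show ?thesis by (simp add: card_image)
qed

lemma card_upper_part_eq_2_iff:
  fixes T :: "nat set"
  assumes "finite T" "i \<in> T" "m \<in> T" "\<forall>k\<in>T. k \<le> m"
  shows "card {k \<in> T. i \<le> k} = 2 \<longleftrightarrow> i \<noteq> m \<and> \<not> (\<exists>j\<in>T. i < j \<and> j < m)"
proof (cases "i \<noteq> m \<and> \<not> (\<exists>j\<in>T. i < j \<and> j < m)")
  case True
  then have "{k \<in> T. i \<le> k} = {i, m}" using assms by force
  then show ?thesis using True by simp
next
  case False
  then consider "i = m" | j where "j \<in> T" "i < j" "j < m" by blast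
  then show ?thesis
  proof cases
    case 1
    then have "{k \<in> T. i \<le> k} = {m}" using assms by force
    then show ?thesis using 1 by simp
  next
    case 2
    then have "{i, j, m} \<subseteq> {k \<in> T. i \<le> k}" using assms by auto
    then have "card {i, j, m} \<le> card {k \<in> T. i \<le> k}"
      using assms(1) by (intro card_mono) auto
    then show ?thesis using 2 by auto
  qed
qed

lemma card_range_split:
  fixes x :: "'a \<Rightarrow> 'b::linorder"
  assumes "finite (x ` S)"
  shows "card (x ` S) = card (x ` {a \<in> S. x a < i}) + card {k \<in> x ` S. i \<le> k}"
proof -
  have "x ` S = x ` {a \<in> S. x a < i} \<union> {k \<in> x ` S. i \<le> k}" by auto
  moreover have "x ` {a \<in> S. x a < i} \<inter> {k \<in> x ` S. i \<le> k} = {}" by auto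
  ultimately show ?thesis using assms by (metis card_Un_disjoint finite_Un)
qed

lemma uvec_in_Dhom:
  assumes x: "x \<in> hhom A (Cn n)" and cl: "closed_alg A"
    and i: "i \<in> x ` carrier A" "i \<noteq> 0"
  shows "uvec A x i \<in> Dhom A"
proof -
  have "i \<le> n - 1" using i hhomD(1)[OF x] by fastforce
  then show ?thesis
    using i(2) hhomD[OF x] closed_algD[OF cl]
    unfolding Dhom_def uvec_def by (auto simp: le_max_iff_disj)
qed

lemma omega_comp_eq_uvec_top:
  assumes x: "x \<in> hhom A (Cn n)"
  shows "omega_comp n A x = uvec A x (n - 1)"
  unfolding omega_comp_def uvec_def
proof (rule restrict_ext)
  fix a assume "a \<in> carrier A"
  then have "x a < n" using hhomD(1)[OF x] by blast
  then show "(omega n \<circ> x) a = (if n - 1 \<le> x a then 1 else 0)"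
    unfolding omega_def by auto
qed

lemma dle_uvec_iff:
  assumes j: "j \<in> x ` carrier A"
  shows "dle A (uvec A x j) (uvec A x i) \<longleftrightarrow> i \<le> j"
proof
  assume d: "dle A (uvec A x j) (uvec A x i)"
  obtain a where "a \<in> carrier A" "x a = j" using j by blast
  with d show "i \<le> j" unfolding dle_def uvec_def by (force split: if_splits)
qed (auto simp: dle_def uvec_def)

lemma inj_on_uvec: "inj_on (uvec A x) (x ` carrier A)"
proof (rule inj_onI)
  fix i j assume ij: "i \<in> x ` carrier A" "j \<in> x ` carrier A" "uvec A x i = uvec A x j"
  have "dle A (uvec A x i) (uvec A x i)" by (simp add: dle_def)
  then show "i = j" using dle_uvec_iff ij by (metis le_antisym)
qed

lemma uvec_in_upset:
  assumes x: "x \<in> hhom A (Cn n)" and cl: "closed_alg A" and i: "i \<in> x ` carrier A - {0}"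
  shows "uvec A x i \<in> upset A (omega_comp n A x)"
proof -
  have "i < n" using i hhomD(1)[OF x] by auto
  then have "dle A (uvec A x (n - 1)) (uvec A x i)" unfolding dle_def uvec_def by auto
  then show ?thesis
    unfolding upset_def omega_comp_eq_uvec_top[OF x] using uvec_in_Dhom[OF x cl] i by auto
qed

lemma Dhom_upward_closed:
  assumes G: "in_Gn TYPE('i) n A" and x: "x \<in> hhom A (Cn n)" and u: "u \<in> Dhom A"
    and above_top: "\<forall>c\<in>carrier A. x c = n - 1 \<longrightarrow> u c = 1"
    and a: "a \<in> carrier A" and b: "b \<in> carrier A" and "u a = 1" and "x a \<le> x b"
  shows "u b = 1"
proof -
  note cl = closed_algD[OF in_Gn_closed_alg[OF G]]
  have "u (himp A a b) = 1"
    using above_top cl(5)[OF a b] hhomD(4)[OF x a b] \<open>x a \<le> x b\<close> by simp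
  then have "u (hjoin A (hmeet A a (himp A a b)) b) = max 1 (u b)"
    using DhomD(3,4)[OF u] cl a b \<open>u a = 1\<close> by simp
  then have "u b = max 1 (u b)" by (simp add: in_Gn_join_meet_imp[OF G a b])
  then show ?thesis using DhomD(1)[OF u b] by auto
qed

lemma upset_omega_comp_top:
  assumes u: "u \<in> upset A (omega_comp n A x)" and c: "c \<in> carrier A" "x c = n - 1"
  shows "u c = 1"
proof -
  have "omega_comp n A x c \<le> u c" using u c(1) unfolding upset_def dle_def by blast
  then have "1 \<le> u c" using c by (simp add: omega_comp_def omega_def)
  moreover have "u \<in> Dhom A" using u unfolding upset_def by blast
  ultimately show ?thesis using DhomD(1) c(1) by fastforce
qed

lemma upset_omega_comp_eq_uvec:
  assumes G: "in_Gn TYPE('i) n A" and x: "x \<in> hhom A (Cn n)"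
    and u: "u \<in> upset A (omega_comp n A x)"
  obtains i where "i \<in> x ` carrier A - {0}" "u = uvec A x i"
proof -
  note cl = closed_algD[OF in_Gn_closed_alg[OF G]]
  have uD: "u \<in> Dhom A" using u unfolding upset_def by blast
  have "\<forall>c\<in>carrier A. x c = n - 1 \<longrightarrow> u c = 1" using upset_omega_comp_top[OF u] by blast
  note up = Dhom_upward_closed[OF G x uD this]
  define S where "S = x ` {a \<in> carrier A. u a = 1}"
  have "S \<subseteq> {..<n}" using hhomD(1)[OF x] unfolding S_def by auto
  then have "finite S" by (rule finite_subset) simp
  moreover have "S \<noteq> {}" using cl(2) DhomD(6)[OF uD] unfolding S_def by blast
  ultimately have "Min S \<in> S" by simp
  then obtain a0 where a0: "a0 \<in> carrier A" "u a0 = 1" "x a0 = Min S"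
    unfolding S_def by auto
  have nonzero: "Min S \<noteq> 0"
  proof
    assume "Min S = 0"
    then have "u (hbot A) = 1" using up[OF a0(1) cl(1) a0(2)] a0(3) by simp
    then show False using DhomD(5)[OF uD] by simp
  qed
  have "u = uvec A x (Min S)"
  proof
    fix a
    show "u a = uvec A x (Min S) a"
    proof (cases "a \<in> carrier A")
      case True
      have "u a = 1 \<longleftrightarrow> Min S \<le> x a"
      proof
        assume "u a = 1"
        then have "x a \<in> S" using True unfolding S_def by blast
        then show "Min S \<le> x a" using \<open>finite S\<close> by simp
      qed (use up[OF a0(1) True a0(2)] a0(3) in simp)
      then show ?thesis using DhomD(1)[OF uD True] True unfolding uvec_def by auto
    qed (simp add: DhomD(2)[OF uD] uvec_def)
  qed
  moreover have "Min S \<in> x ` carrier A - {0}"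
    using a0(1) a0(3)[symmetric] nonzero by blast
  ultimately show ?thesis by (rule that[rotated])
qed

lemma bij_betw_uvec_upset:
  assumes G: "in_Gn TYPE('i) n A" and x: "x \<in> hhom A (Cn n)"
  shows "bij_betw (uvec A x) (x ` carrier A - {0}) (upset A (omega_comp n A x))"
  unfolding bij_betw_def
proof
  show "inj_on (uvec A x) (x ` carrier A - {0})"
    using inj_on_uvec by (rule inj_on_subset) blast
  show "uvec A x ` (x ` carrier A - {0}) = upset A (omega_comp n A x)"
  proof
    show "uvec A x ` (x ` carrier A - {0}) \<subseteq> upset A (omega_comp n A x)"
      using uvec_in_upset[OF x in_Gn_closed_alg[OF G]] by blast
    show "upset A (omega_comp n A x) \<subseteq> uvec A x ` (x ` carrier A - {0})"
    proof
      fix u assume "u \<in> upset A (omega_comp n A x)"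
      then obtain i where "i \<in> x ` carrier A - {0}" "u = uvec A x i"
        by (rule upset_omega_comp_eq_uvec[OF G x])
      then show "u \<in> uvec A x ` (x ` carrier A - {0})" by blast
    qed
  qed
qed

lemma card_upset_omega_comp_le:
  assumes G: "in_Gn TYPE('i) n A" and x: "x \<in> hhom A (Cn n)"
  shows "card (upset A (omega_comp n A x)) \<le> n - 1"
proof -
  have "card (upset A (omega_comp n A x)) = card (x ` carrier A - {0})"
    using bij_betw_same_card[OF bij_betw_uvec_upset[OF G x]] by simp
  also have "\<dots> \<le> card ({..<n} - {0})"
    using hhomD(1)[OF x] by (intro card_mono) auto
  also have "\<dots> = n - 1" by (cases n) auto
  finally show ?thesis .
qed

lemma dle_omega_comp_iff:
  "dle A (omega_comp n A x) (omega_comp n A y) \<longleftrightarrow>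
     {a \<in> carrier A. x a = n - 1} \<subseteq> {a \<in> carrier A. y a = n - 1}"
  unfolding dle_def omega_comp_def omega_def by auto

lemma covers_uvec_omega_comp_iff:
  assumes G: "in_Gn TYPE('i) n A" and x: "x \<in> hhom A (Cn n)"
    and i: "i \<in> x ` carrier A - {0}"
  shows "covers A (uvec A x i) (omega_comp n A x) \<longleftrightarrow>
           i \<noteq> n - 1 \<and> \<not> (\<exists>j\<in>x ` carrier A. i < j \<and> j < n - 1)"
proof -
  note cl = in_Gn_closed_alg[OF G]
  have "i < n" using i hhomD(1)[OF x] by auto
  then have top: "n - 1 \<in> x ` carrier A - {0}" using i hhom_top_in_range[OF x cl] by auto
  have in_upset: "uvec A x i \<in> upset A (uvec A x (n - 1))"
    "uvec A x (n - 1) \<in> upset A (uvec A x (n - 1))"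
    using uvec_in_upset[OF x cl] i top unfolding omega_comp_eq_uvec_top[OF x] by blast+
  have distinct: "uvec A x (n - 1) \<noteq> uvec A x i \<longleftrightarrow> i \<noteq> n - 1"
    using inj_on_eq_iff[OF inj_on_uvec DiffD1[OF top] DiffD1[OF i]] by auto
  have between: "(\<exists>u\<in>Dhom A. dle A (uvec A x (n - 1)) u \<and> dle A u (uvec A x i) \<and>
         u \<noteq> uvec A x (n - 1) \<and> u \<noteq> uvec A x i) \<longleftrightarrow> (\<exists>j\<in>x ` carrier A. i < j \<and> j < n - 1)"
  proof
    assume "\<exists>u\<in>Dhom A. dle A (uvec A x (n - 1)) u \<and> dle A u (uvec A x i) \<and>
         u \<noteq> uvec A x (n - 1) \<and> u \<noteq> uvec A x i"
    then obtain u where u: "u \<in> Dhom A" "dle A (uvec A x (n - 1)) u" "dle A u (uvec A x i)"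
      "u \<noteq> uvec A x (n - 1)" "u \<noteq> uvec A x i" by blast
    then have "u \<in> upset A (omega_comp n A x)"
      unfolding upset_def omega_comp_eq_uvec_top[OF x] by blast
    then obtain j where j: "j \<in> x ` carrier A - {0}" "u = uvec A x j"
      using upset_omega_comp_eq_uvec[OF G x] by blast
    have "i \<le> j" using u(3) j dle_uvec_iff[of j x A] by auto
    moreover have "j \<le> n - 1" using j(1) hhomD(1)[OF x] by fastforce
    moreover have "i \<noteq> j" "j \<noteq> n - 1" using u(4,5) j(2) by auto
    ultimately show "\<exists>j\<in>x ` carrier A. i < j \<and> j < n - 1"
      using j(1) by (intro bexI[of _ j]) auto
  next
    assume "\<exists>j\<in>x ` carrier A. i < j \<and> j < n - 1"
    then obtain j where j: "j \<in> x ` carrier A" "i < j" "j < n - 1" by blast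
    have "uvec A x j \<noteq> uvec A x (n - 1)" "uvec A x j \<noteq> uvec A x i"
      using inj_on_eq_iff[OF inj_on_uvec j(1)] i top j(2,3) by auto
    moreover have "dle A (uvec A x (n - 1)) (uvec A x j)" "dle A (uvec A x j) (uvec A x i)"
      using dle_uvec_iff[of j x A] dle_uvec_iff[of "n - 1" x A] j top by auto
    ultimately show "\<exists>u\<in>Dhom A. dle A (uvec A x (n - 1)) u \<and> dle A u (uvec A x i) \<and>
         u \<noteq> uvec A x (n - 1) \<and> u \<noteq> uvec A x i"
      using uvec_in_Dhom[OF x cl j(1)] j(2) by (intro bexI[of _ "uvec A x j"]) auto
  qed
  show ?thesis
    using in_upset unfolding upset_def
    by (simp only: covers_def omega_comp_eq_uvec_top[OF x] distinct between mem_Collect_eq simp_thms)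
qed

lemma hhom_eq_iff_if_top_preimage:
  assumes x: "x \<in> hhom A (Cn n)" and y: "y \<in> hhom A (Cn n)" and cl: "closed_alg A"
    and top_preimage: "\<forall>c\<in>carrier A. y c = n - 1 \<longleftrightarrow> i \<le> x c" and "i < n"
    and a: "a \<in> carrier A" and b: "b \<in> carrier A"
  shows "y a = y b \<longleftrightarrow> x a = x b \<or> (i \<le> x a \<and> i \<le> x b)"
proof -
  have "y a < n" "y b < n" "x a < n" "x b < n" using hhomD(1)[OF y] hhomD(1)[OF x] a b by auto
  have "y a = y b \<longleftrightarrow> y (himp A a b) = n - 1 \<and> y (himp A b a) = n - 1"
    using hhomD(4)[OF y a b] hhomD(4)[OF y b a] \<open>y a < n\<close> \<open>y b < n\<close> by auto
  also have "\<dots> \<longleftrightarrow> i \<le> x (himp A a b) \<and> i \<le> x (himp A b a)"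
    using top_preimage closed_algD(5)[OF cl] a b by simp
  also have "\<dots> \<longleftrightarrow> x a = x b \<or> (i \<le> x a \<and> i \<le> x b)"
    using hhomD(4)[OF x a b] hhomD(4)[OF x b a] \<open>x a < n\<close> \<open>x b < n\<close> \<open>i < n\<close> by auto
  finally show ?thesis .
qed

lemma card_range_if_top_preimage:
  assumes x: "x \<in> hhom A (Cn n)" and y: "y \<in> hhom A (Cn n)" and cl: "closed_alg A"
    and top_preimage: "\<forall>c\<in>carrier A. y c = n - 1 \<longleftrightarrow> i \<le> x c" and "i < n"
  shows "card (y ` carrier A) = card (x ` {a \<in> carrier A. x a < i}) + 1"
proof -
  define L where "L = {a \<in> carrier A. x a < i}"
  have "y ` carrier A = insert (n - 1) (y ` L)"
    using top_preimage hhom_top_in_range[OF y cl] unfolding L_def by fastforce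
  moreover have "n - 1 \<notin> y ` L" using top_preimage unfolding L_def by auto
  moreover have "y ` L \<subseteq> {..<n}" using hhomD(1)[OF y] unfolding L_def by auto
  then have "finite (y ` L)" by (rule finite_subset) simp
  moreover have "card (y ` L) = card (x ` L)"
    using hhom_eq_iff_if_top_preimage[OF x y cl top_preimage \<open>i < n\<close>] unfolding L_def
    by (intro card_image_eq_if_same_kernel) auto
  ultimately show ?thesis unfolding L_def by simp
qed

lemma covers_omega_comp_iff:
  assumes "n \<ge> 2" and G: "in_Gn TYPE('i) n A"
    and x: "x \<in> hhom A (Cn n)" and y: "y \<in> hhom A (Cn n)"
  shows "covers A (omega_comp n A y) (omega_comp n A x) \<longleftrightarrow>
           {a \<in> carrier A. x a = n - 1} \<subseteq> {a \<in> carrier A. y a = n - 1} \<and>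
           card (x ` carrier A) - 1 = card (y ` carrier A)"
proof (cases "{a \<in> carrier A. x a = n - 1} \<subseteq> {a \<in> carrier A. y a = n - 1}")
  case False
  then show ?thesis using dle_omega_comp_iff unfolding covers_def by blast
next
  case True
  note cl = in_Gn_closed_alg[OF G]
  have "omega_comp n A y \<in> Dhom A"
    using uvec_in_Dhom[OF y cl hhom_top_in_range[OF y cl]] \<open>n \<ge> 2\<close>
    by (simp add: omega_comp_eq_uvec_top[OF y])
  with True have "omega_comp n A y \<in> upset A (omega_comp n A x)"
    by (simp add: upset_def dle_omega_comp_iff)
  then obtain i where i: "i \<in> x ` carrier A - {0}" and y_eq: "omega_comp n A y = uvec A x i"
    by (rule upset_omega_comp_eq_uvec[OF G x])
  have top_preimage: "\<forall>c\<in>carrier A. y c = n - 1 \<longleftrightarrow> i \<le> x c"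
  proof
    fix c assume c: "c \<in> carrier A"
    have "omega_comp n A y c = uvec A x i c" by (rule fun_cong[OF y_eq])
    then have "(if y c = n - 1 then 1 else 0) = (if i \<le> x c then 1 else (0::nat))"
      using c by (simp add: omega_comp_def omega_def uvec_def)
    then show "y c = n - 1 \<longleftrightarrow> i \<le> x c" by (cases "y c = n - 1"; cases "i \<le> x c") simp_all
  qed
  have range_bound: "\<forall>k\<in>x ` carrier A. k \<le> n - 1" using hhomD(1)[OF x] by fastforce
  then have "x ` carrier A \<subseteq> {..n - 1}" by auto
  then have fin: "finite (x ` carrier A)" by (rule finite_subset) simp
  have "card {k \<in> x ` carrier A. i \<le> k} \<noteq> 0" using fin i by auto
  moreover have "i < n" using i range_bound \<open>n \<ge> 2\<close> by fastforce
  ultimately have "card (x ` carrier A) - 1 = card (y ` carrier A) \<longleftrightarrow>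
      card {k \<in> x ` carrier A. i \<le> k} = 2"
    unfolding card_range_split[OF fin, of i]
      card_range_if_top_preimage[OF x y cl top_preimage \<open>i < n\<close>] by arith
  also have "\<dots> \<longleftrightarrow> i \<noteq> n - 1 \<and> \<not> (\<exists>j\<in>x ` carrier A. i < j \<and> j < n - 1)"
    using fin i hhom_top_in_range[OF x cl] range_bound by (intro card_upper_part_eq_2_iff) auto
  also have "\<dots> \<longleftrightarrow> covers A (omega_comp n A y) (omega_comp n A x)"
    using covers_uvec_omega_comp_iff[OF G x i] y_eq by simp
  finally show ?thesis using True by simp
qed

theorem lemma2p1:
  fixes n :: nat and A :: "'a halg" and x :: "'a \<Rightarrow> nat"
  assumes "n \<ge> 2"
    and "in_Gn TYPE('i) n A"
    and "x \<in> hhom A (Cn n)"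
  shows "(\<forall>i \<in> x ` carrier A - {0}. uvec A x i \<in> Dhom A)
       \<and> bij_betw (uvec A x) (x ` carrier A - {0}) (upset A (omega_comp n A x))
       \<and> card (upset A (omega_comp n A x)) \<le> n - 1
       \<and> (\<forall>y \<in> hhom A (Cn n).
            covers A (omega_comp n A y) (omega_comp n A x) \<longleftrightarrow>
              ({a \<in> carrier A. x a = n - 1} \<subseteq> {a \<in> carrier A. y a = n - 1}
               \<and> card (x ` carrier A) - 1 = card (y ` carrier A)))"
  using uvec_in_Dhom[OF assms(3) in_Gn_closed_alg[OF assms(2)]]
    bij_betw_uvec_upset[OF assms(2,3)] card_upset_omega_comp_le[OF assms(2,3)]
    covers_omega_comp_iff[OF assms]
  by blast

end
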